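(* Let $X$ be a compact space and let $Y$ be a zero-dimensional closed subspace of $X$. If $F$ is a closed subset of $C(X,[0,1])$ such that $f(Y)$ is infinite for every $f\in F$, then $F$ is a $Z$-set in $C(X,[0,1])$.
   Context: Compact spaces are Hausdorff. $C(X,[0,1])$ is the space of continuous maps $X\to[0,1]$ with the sup-metric topology. For topological spaces $K,T$, $C(K,T)$ denotes the space of continuous maps $K\to T$ with the compact-open topology. A closed subset $F$ of a topological space $T$ is a $Z$-set in $T$ if for every compact (Hausdorff) space $K$ the set $C(K,T\setminus F)$ is dense in $C(K,T)$. *)

theory Defs
  imports "HOL-Analysis.Analysis"
begin

text \<open>The space C(X,[0,1]) of continuous maps X -> [0,1] with the sup-metric topology.
  Functions are extensional (undefined outside the topspace of X).\<close>
definition unit_cfun_topology :: "'a topology \<Rightarrow> ('a \<Rightarrow> real) topology" where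
  "unit_cfun_topology X = mtopology_of (cfunspace X (submetric euclidean_metric {0..1}))"

definition cmaps :: "'k topology \<Rightarrow> 'b topology \<Rightarrow> ('k \<Rightarrow> 'b) set" where
  "cmaps K T = {g. continuous_map K T g \<and> g \<in> extensional (topspace K)}"

definition compact_open_topology :: "'k topology \<Rightarrow> 'b topology \<Rightarrow> ('k \<Rightarrow> 'b) topology" where
  "compact_open_topology K T =
     topology_generated_by
       {{g \<in> cmaps K T. g ` C \<subseteq> U} | C U. compactin K C \<and> openin T U}"

definition Z_set :: "'k itself \<Rightarrow> 'b topology \<Rightarrow> 'b set \<Rightarrow> bool" where
  "Z_set (_ :: 'k itself) T F \<longleftrightarrow>
     closedin T F \<and>
     (\<forall>K :: 'k topology. compact_space K \<and> Hausdorff_space K \<longrightarrow>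
        (compact_open_topology K T) closure_of (cmaps K (subtopology T (topspace T - F)))
          = topspace (compact_open_topology K T))"

end

theory Submission
  imports Defs
begin

(* Let g : K -> C(X,[0,1]) be continuous, K compact, and e > 0.  Compactness of K makes the
  family {g k} equicontinuous, so every y in Y has a neighbourhood N y on which each g k varies
  by less than e.  As Y is zero-dimensional, there are finitely many points ys in Y and Urysohn
  functions \<Phi> y supported in N y, taking only the values 0 and 1 on Y, whose 1-sets cover Y.
  Replacing g k successively by the constant g k y where \<Phi> y = 1 (the convex combinations
  flatten) moves it by at most e, is 1-Lipschitz in g k, and leaves only the finitely many
  values g k y on Y, so the new map avoids F.  Uniform approximations are dense in the
  compact-open topology because, for a metric target, every compact-open neighbourhood of a
  map contains a uniform one (Lebesgue number of the compact image). *)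

lemma topspace_compact_open_topology:
  "topspace (compact_open_topology K T) = cmaps K T"
proof -
  have "cmaps K T \<in> {{g \<in> cmaps K T. g ` C \<subseteq> U} | C U. compactin K C \<and> openin T U}"
    by (rule CollectI, rule exI[of _ "{}"], rule exI[of _ "topspace T"]) auto
  then show ?thesis
    unfolding compact_open_topology_def topology_generated_by_topspace by auto
qed

lemma cmaps_subtopology:
  "cmaps K (subtopology T S) = {g \<in> cmaps K T. g ` topspace K \<subseteq> S}"
  by (auto simp: cmaps_def continuous_map_in_subtopology)

definition uniform_neighbourhood :: "'k topology \<Rightarrow> 'b metric \<Rightarrow> ('k \<Rightarrow> 'b) \<Rightarrow> ('k \<Rightarrow> 'b) set \<Rightarrow> bool" where
  "uniform_neighbourhood K m g U \<longleftrightarrow>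
     (\<exists>\<epsilon>>0. \<forall>h\<in>cmaps K (mtopology_of m). (\<forall>k\<in>topspace K. mdist m (h k) (g k) < \<epsilon>) \<longrightarrow> h \<in> U)"

lemma uniform_neighbourhood_mono:
  "uniform_neighbourhood K m g U \<Longrightarrow> U \<subseteq> V \<Longrightarrow> uniform_neighbourhood K m g V"
  unfolding uniform_neighbourhood_def by blast

lemma uniform_neighbourhood_Int:
  assumes "uniform_neighbourhood K m g U" "uniform_neighbourhood K m g V"
  shows "uniform_neighbourhood K m g (U \<inter> V)"
proof -
  obtain \<epsilon>1 \<epsilon>2 where "\<epsilon>1 > 0" "\<epsilon>2 > 0"
    "\<forall>h\<in>cmaps K (mtopology_of m). (\<forall>k\<in>topspace K. mdist m (h k) (g k) < \<epsilon>1) \<longrightarrow> h \<in> U"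
    "\<forall>h\<in>cmaps K (mtopology_of m). (\<forall>k\<in>topspace K. mdist m (h k) (g k) < \<epsilon>2) \<longrightarrow> h \<in> V"
    using assms unfolding uniform_neighbourhood_def by blast
  then show ?thesis
    unfolding uniform_neighbourhood_def by (intro exI[of _ "min \<epsilon>1 \<epsilon>2"]) auto
qed

lemma uniform_neighbourhood_compact_open_subbasic:
  assumes "compactin K C" "openin (mtopology_of m) V" "g \<in> cmaps K (mtopology_of m)" "g ` C \<subseteq> V"
  shows "uniform_neighbourhood K m g {h \<in> cmaps K (mtopology_of m). h ` C \<subseteq> V}"
proof -
  interpret Metric_space "mspace m" "mdist m"
    by (rule Metric_space_mspace_mdist)
  have cmaps_iff: "h \<in> cmaps K (mtopology_of m) \<longleftrightarrow> continuous_map K mtopology h \<and> h \<in> extensional (topspace K)" for h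
    by (simp add: cmaps_def mtopology_of_def)
  have "compactin mtopology (g ` C)"
    using assms(1,3) image_compactin cmaps_iff by blast
  then obtain \<delta> where \<delta>: "\<delta> > 0" "\<And>z. z \<in> g ` C \<Longrightarrow> mball z \<delta> \<subseteq> V"
    using lebesgue_number[of "g ` C" "{V}"] assms(2,4) by (auto simp: mtopology_of_def)
  have "h ` C \<subseteq> V" if h: "h \<in> cmaps K (mtopology_of m)" "\<forall>k\<in>topspace K. mdist m (h k) (g k) < \<delta>" for h
  proof
    fix z assume "z \<in> h ` C"
    then obtain c where c: "c \<in> C" "z = h c"
      by blast
    then have "c \<in> topspace K"
      using assms(1) compactin_subset_topspace by blast
    then have "h c \<in> mspace m" "g c \<in> mspace m"
      using continuous_map_funspace h(1) assms(3) cmaps_iff by fastforce+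
    then have "h c \<in> mball (g c) \<delta>"
      using h(2) \<open>c \<in> topspace K\<close> commute by auto
    then show "z \<in> V"
      using \<delta>(2) c by blast
  qed
  then show ?thesis
    unfolding uniform_neighbourhood_def using \<delta>(1) by blast
qed

lemma openin_compact_open_topology_imp_uniform_neighbourhood:
  assumes "openin (compact_open_topology K (mtopology_of m)) U" "g \<in> U"
  shows "uniform_neighbourhood K m g U"
proof -
  have "generate_topology_on
          {{h \<in> cmaps K (mtopology_of m). h ` C \<subseteq> V} | C V. compactin K C \<and> openin (mtopology_of m) V} U"
    using assms(1) by (simp add: compact_open_topology_def openin_topology_generated_by_iff)
  then show ?thesis
    using assms(2)
  proof (induction arbitrary: g rule: generate_topology_on.induct)
    case Empty
    then show ?case by simp
  next
    case (Int U V)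
    then show ?case
      by (simp add: uniform_neighbourhood_Int)
  next
    case (UN \<U>)
    then obtain U where "U \<in> \<U>" "g \<in> U"
      by blast
    then show ?case
      using UN.IH uniform_neighbourhood_mono by blast
  next
    case (Basis s)
    then show ?case
      using uniform_neighbourhood_compact_open_subbasic by fastforce
  qed
qed

lemma compact_open_closure_of_uniformly_dense:
  assumes "S \<subseteq> cmaps K (mtopology_of m)"
    and "\<And>g \<epsilon>. g \<in> cmaps K (mtopology_of m) \<Longrightarrow> \<epsilon> > 0 \<Longrightarrow>
           \<exists>h\<in>S. \<forall>k\<in>topspace K. mdist m (h k) (g k) < \<epsilon>"
  shows "compact_open_topology K (mtopology_of m) closure_of S =
         topspace (compact_open_topology K (mtopology_of m))"
proof -
  have "g \<in> compact_open_topology K (mtopology_of m) closure_of S"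
    if g: "g \<in> cmaps K (mtopology_of m)" for g
  proof (subst in_closure_of, intro conjI allI impI)
    show "g \<in> topspace (compact_open_topology K (mtopology_of m))"
      using g by (simp add: topspace_compact_open_topology)
    fix U assume "g \<in> U \<and> openin (compact_open_topology K (mtopology_of m)) U"
    then have "uniform_neighbourhood K m g U"
      by (simp add: openin_compact_open_topology_imp_uniform_neighbourhood)
    then show "\<exists>h. h \<in> S \<and> h \<in> U"
      using assms g unfolding uniform_neighbourhood_def by blast
  qed
  then show ?thesis
    using closure_of_subset_topspace[of "compact_open_topology K (mtopology_of m)" S]
    unfolding topspace_compact_open_topology by blast
qed

primrec flatten :: "('a \<Rightarrow> 'a \<Rightarrow> real) \<Rightarrow> 'a list \<Rightarrow> ('a \<Rightarrow> real) \<Rightarrow> 'a \<Rightarrow> real" where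
  "flatten \<Phi> [] f x = f x"
| "flatten \<Phi> (y # ys) f x = (1 - \<Phi> y x) * flatten \<Phi> ys f x + \<Phi> y x * f y"

lemma flatten_diff:
  "flatten \<Phi> ys f x - flatten \<Phi> ys f' x = flatten \<Phi> ys (\<lambda>z. f z - f' z) x"
  by (induction ys) (simp_all add: algebra_simps)

lemma flatten_in_interval:
  fixes a b :: real
  assumes "f x \<in> {a..b}"
    and "\<And>y. y \<in> set ys \<Longrightarrow> \<Phi> y x \<in> {0..1}"
    and "\<And>y. y \<in> set ys \<Longrightarrow> \<Phi> y x \<noteq> 0 \<Longrightarrow> f y \<in> {a..b}"
  shows "flatten \<Phi> ys f x \<in> {a..b}"
  using assms(2,3)
proof (induction ys)
  case Nil
  then show ?case using assms(1) by simp
next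
  case (Cons y ys)
  then have IH: "flatten \<Phi> ys f x \<in> {a..b}" and \<Phi>01: "\<Phi> y x \<in> {0..1}"
    by simp_all
  show ?case
  proof (cases "\<Phi> y x = 0")
    case True
    then show ?thesis using IH by simp
  next
    case False
    then have "f y \<in> {a..b}"
      using Cons.prems(2) by simp
    then show ?thesis
      using convexD[OF convex_real_interval(5) IH, of "f y" "1 - \<Phi> y x" "\<Phi> y x"] \<Phi>01 by simp
  qed
qed

lemma abs_flatten_diff_le:
  assumes "\<And>y. y \<in> set ys \<Longrightarrow> \<Phi> y x \<in> {0..1}"
    and "\<bar>f x - f' x\<bar> \<le> D" and "\<And>y. y \<in> set ys \<Longrightarrow> \<bar>f y - f' y\<bar> \<le> D"
  shows "\<bar>flatten \<Phi> ys f x - flatten \<Phi> ys f' x\<bar> \<le> D"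
proof -
  have "flatten \<Phi> ys (\<lambda>z. f z - f' z) x \<in> {-D..D}"
  proof (rule flatten_in_interval)
    show "f y - f' y \<in> {-D..D}" if "y \<in> set ys" for y
      using assms(3)[OF that] by (auto simp: abs_le_iff)
  qed (use assms(1,2) in \<open>auto simp: abs_le_iff\<close>)
  then show ?thesis
    by (simp add: flatten_diff abs_le_iff)
qed

lemma abs_flatten_diff_self_le:
  assumes "0 \<le> e" and "\<And>y. y \<in> set ys \<Longrightarrow> \<Phi> y x \<in> {0..1}"
    and "\<And>y. y \<in> set ys \<Longrightarrow> \<Phi> y x \<noteq> 0 \<Longrightarrow> \<bar>f y - f x\<bar> \<le> e"
  shows "\<bar>flatten \<Phi> ys f x - f x\<bar> \<le> e"
proof -
  have "flatten \<Phi> ys f x \<in> {f x - e..f x + e}"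
  proof (rule flatten_in_interval)
    show "f y \<in> {f x - e..f x + e}" if "y \<in> set ys" "\<Phi> y x \<noteq> 0" for y
      using assms(3)[OF that] by (auto simp: abs_le_iff)
  qed (use assms(1,2) in auto)
  then show ?thesis
    by (simp add: abs_le_iff)
qed

lemma flatten_in_image:
  assumes "\<And>y. y \<in> set ys \<Longrightarrow> \<Phi> y z \<in> {0, 1}" "\<exists>y\<in>set ys. \<Phi> y z = 1"
  shows "flatten \<Phi> ys f z \<in> f ` set ys"
  using assms
proof (induction ys)
  case Nil
  then show ?case by simp
next
  case (Cons y ys)
  show ?case
  proof (cases "\<Phi> y z = 1")
    case True
    then show ?thesis by simp
  next
    case False
    then have "\<Phi> y z = 0"
      using Cons.prems(1) by auto
    moreover have "flatten \<Phi> ys f z \<in> f ` set ys"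
      using Cons False by auto
    ultimately show ?thesis by auto
  qed
qed

lemma continuous_map_flatten:
  assumes "continuous_map X euclideanreal f"
    and "\<And>y. y \<in> set ys \<Longrightarrow> continuous_map X euclideanreal (\<Phi> y)"
  shows "continuous_map X euclideanreal (flatten \<Phi> ys f)"
  using assms(2)
proof (induction ys)
  case Nil
  then show ?case using assms(1) by (simp add: eta_contract_eq)
next
  case (Cons y ys)
  have "flatten \<Phi> (y # ys) f = (\<lambda>x. (1 - \<Phi> y x) * flatten \<Phi> ys f x + \<Phi> y x * f y)"
    by (rule ext) simp
  then show ?case
    using Cons by (auto intro!: continuous_intros)
qed

lemma mdist_le_mdist_cfunspace:
  "f \<in> mspace (cfunspace X m) \<Longrightarrow> g \<in> mspace (cfunspace X m) \<Longrightarrow> x \<in> topspace X \<Longrightarrow>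
   mdist m (f x) (g x) \<le> mdist (cfunspace X m) f g"
  by (rule mdist_cfunspace_imp_mdist_le[OF _ _ order_refl])

lemma compact_family_equicontinuous_at:
  assumes "compact_space K" and g: "continuous_map K (mtopology_of (cfunspace X m)) g"
    and y: "y \<in> topspace X" and "e > 0"
  obtains N where "openin X N" "y \<in> N"
    "\<And>x k. x \<in> N \<Longrightarrow> k \<in> topspace K \<Longrightarrow> mdist m (g k x) (g k y) < e"
proof -
  define C where "C = cfunspace X m"
  interpret C: Metric_space "mspace C" "mdist C"
    by (rule Metric_space_mspace_mdist)
  interpret Metric_space "mspace m" "mdist m"
    by (rule Metric_space_mspace_mdist)
  have gcont: "continuous_map K C.mtopology g"
    using g by (simp only: C_def mtopology_of_def)
  \<comment> \<open>A finite e/3-net of the compact image of g reduces the claim to finitely many continuous maps.\<close>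
  have "compactin C.mtopology (g ` topspace K)"
    using image_compactin[OF _ gcont] \<open>compact_space K\<close> by (simp add: compact_space_def)
  then obtain G where G: "finite G" "G \<subseteq> g ` topspace K" "g ` topspace K \<subseteq> (\<Union>f\<in>G. C.mball f (e / 3))"
    using C.compactin_imp_mtotally_bounded \<open>e > 0\<close> unfolding C.mtotally_bounded_def
    by (meson divide_pos_pos zero_less_numeral)
  have GC: "f \<in> mspace C" if "f \<in> G" for f
    using G(2) that continuous_map_funspace[OF gcont] by auto
  have fM: "f x \<in> mspace m" if "f \<in> mspace C" "x \<in> topspace X" for f x
    using that by (auto simp: C_def)
  have pointwise: "mdist m (f x) (f' x) \<le> mdist C f f'"
    if "f \<in> mspace C" "f' \<in> mspace C" "x \<in> topspace X" for f f' x
    using mdist_le_mdist_cfunspace[OF that[unfolded C_def]] unfolding C_def .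
  define V where "V f = {x \<in> topspace X. f x \<in> mball (f y) (e / 3)}" for f
  define N where "N = topspace X \<inter> \<Inter> (V ` G)"
  have "openin X (V f)" if "f \<in> G" for f
  proof -
    have "continuous_map X mtopology f"
      using GC[OF that] by (simp add: C_def mtopology_of_def)
    then show ?thesis
      unfolding V_def by (rule openin_continuous_map_preimage) simp
  qed
  then have "openin X N"
    unfolding N_def using G(1) by (intro openin_Int_Inter) auto
  moreover have "y \<in> N"
    using GC fM y \<open>e > 0\<close> by (auto simp: N_def V_def)
  moreover have "mdist m (g k x) (g k y) < e" if x: "x \<in> N" and k: "k \<in> topspace K" for x k
  proof -
    obtain f where f: "f \<in> G" "g k \<in> C.mball f (e / 3)"
      using G(3) k by blast
    have gk: "g k \<in> mspace C" and xX: "x \<in> topspace X"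
      using f(2) x by (auto simp: N_def)
    have "mdist m (g k x) (f x) < e / 3" "mdist m (f y) (g k y) < e / 3"
      using f(2) pointwise[OF gk GC[OF f(1)] xX] pointwise[OF GC[OF f(1)] gk y] C.commute[of f "g k"]
      by auto
    moreover have "mdist m (f x) (f y) < e / 3"
      using x f(1) commute by (auto simp: N_def V_def)
    moreover have "mdist m (g k x) (g k y) \<le> mdist m (g k x) (f x) + mdist m (f x) (g k y)"
      "mdist m (f x) (g k y) \<le> mdist m (f x) (f y) + mdist m (f y) (g k y)"
      using fM gk GC[OF f(1)] xX y by (blast intro: triangle)+
    ultimately show ?thesis
      by linarith
  qed
  ultimately show thesis
    using that by blast
qed

lemma compactin_indexed_finite_subcover:
  assumes "compactin X S" "\<And>i. i \<in> I \<Longrightarrow> openin X (U i)" "S \<subseteq> (\<Union>i\<in>I. U i)"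
  shows "\<exists>J. finite J \<and> J \<subseteq> I \<and> S \<subseteq> (\<Union>i\<in>J. U i)"
proof -
  obtain \<F> where "finite \<F>" "\<F> \<subseteq> U ` I" "S \<subseteq> \<Union>\<F>"
    using compactinD[OF assms(1), of "U ` I"] assms(2,3) by blast
  then show ?thesis
    by (metis finite_subset_image)
qed

lemma zero_dim_subspace_Urysohn_clopen:
  assumes "normal_space X" "closedin X Y" "subtopology X Y dim_le 0" "openin X N" "y \<in> Y" "y \<in> N"
  shows "\<exists>Q \<phi>. openin X Q \<and> y \<in> Q \<and> continuous_map X (top_of_set {0..1}) \<phi> \<and>
           (\<forall>x\<in>topspace X - N. \<phi> x = (0::real)) \<and> (\<forall>z\<in>Y \<inter> Q. \<phi> z = 1) \<and> (\<forall>z\<in>Y - Q. \<phi> z = 0)"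
proof -
  have "neighbourhood_base_of (\<lambda>U. closedin (subtopology X Y) U \<and> openin (subtopology X Y) U) (subtopology X Y)"
    using assms(3) dimension_le_0_neighbourhood_base_of_clopen by blast
  moreover have "openin (subtopology X Y) (N \<inter> Y)"
    using assms(4) by (rule openin_subtopology_Int)
  ultimately obtain P where P: "closedin (subtopology X Y) P" "openin (subtopology X Y) P" "y \<in> P" "P \<subseteq> N \<inter> Y"
    using assms(5,6) unfolding neighbourhood_base_of by (metis IntI subsetD)
  obtain Q where Q: "openin X Q" "P = Q \<inter> Y"
    using P(2) unfolding openin_subtopology by blast
  have "closedin X P"
    using P(1) assms(2) closedin_trans_full by blast
  moreover have "closedin X ((Y - Q) \<union> (topspace X - N))"
    using assms(2,4) Q(1) by (intro closedin_Un closedin_diff) auto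
  moreover have "disjnt ((Y - Q) \<union> (topspace X - N)) P"
    using P(4) Q(2) by (auto simp: disjnt_def)
  ultimately obtain \<phi> :: "'a \<Rightarrow> real" where \<phi>: "continuous_map X (top_of_set {0..1}) \<phi>"
    "\<phi> ` ((Y - Q) \<union> (topspace X - N)) \<subseteq> {0}" "\<phi> ` P \<subseteq> {1}"
    using Urysohn_lemma[OF assms(1) _ _ _ zero_le_one] by blast
  then show ?thesis
    using Q P(3) by (intro exI[of _ Q] exI[of _ \<phi>]) (auto simp: image_subset_iff)
qed

lemma zero_dim_subspace_indicator_family:
  assumes "compact_space X" "Hausdorff_space X" "closedin X Y" "subtopology X Y dim_le 0"
    and N: "\<And>y. y \<in> Y \<Longrightarrow> openin X (N y) \<and> y \<in> N y"
  obtains ys and \<Phi> :: "'a \<Rightarrow> 'a \<Rightarrow> real" where "set ys \<subseteq> Y"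
    "\<And>y. y \<in> set ys \<Longrightarrow> continuous_map X (top_of_set {0..1}) (\<Phi> y)"
    "\<And>y x. y \<in> set ys \<Longrightarrow> x \<in> topspace X - N y \<Longrightarrow> \<Phi> y x = 0"
    "\<And>y z. y \<in> set ys \<Longrightarrow> z \<in> Y \<Longrightarrow> \<Phi> y z \<in> {0, 1}"
    "\<And>z. z \<in> Y \<Longrightarrow> \<exists>y\<in>set ys. \<Phi> y z = 1"
proof -
  have "normal_space X"
    using assms(1,2) compact_Hausdorff_or_regular_imp_normal_space by blast
  then have "\<exists>Q \<phi>. openin X Q \<and> y \<in> Q \<and> continuous_map X (top_of_set {0..1}) \<phi> \<and>
      (\<forall>x\<in>topspace X - N y. \<phi> x = (0::real)) \<and> (\<forall>z\<in>Y \<inter> Q. \<phi> z = 1) \<and> (\<forall>z\<in>Y - Q. \<phi> z = 0)"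
    if "y \<in> Y" for y
    using zero_dim_subspace_Urysohn_clopen[OF _ assms(3,4)] N[OF that] that by blast
  then obtain Q \<Phi> where Q\<Phi>: "\<And>y. y \<in> Y \<Longrightarrow> openin X (Q y) \<and> y \<in> Q y \<and>
      continuous_map X (top_of_set {0..1}) (\<Phi> y) \<and> (\<forall>x\<in>topspace X - N y. \<Phi> y x = (0::real)) \<and>
      (\<forall>z\<in>Y \<inter> Q y. \<Phi> y z = 1) \<and> (\<forall>z\<in>Y - Q y. \<Phi> y z = 0)"
    by metis
  have "compactin X Y"
    using assms(1,3) closedin_compact_space by blast
  moreover have "Y \<subseteq> (\<Union>y\<in>Y. Q y)"
    using Q\<Phi> by blast
  ultimately have "\<exists>Ys. finite Ys \<and> Ys \<subseteq> Y \<and> Y \<subseteq> (\<Union>y\<in>Ys. Q y)"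
    using Q\<Phi> by (intro compactin_indexed_finite_subcover) auto
  then obtain Ys where Ys: "finite Ys" "Ys \<subseteq> Y" "Y \<subseteq> (\<Union>y\<in>Ys. Q y)"
    by blast
  then obtain ys where ys: "set ys = Ys"
    using finite_list by blast
  show thesis
  proof (rule that[of ys \<Phi>])
    show "set ys \<subseteq> Y"
      using Ys(2) ys by blast
    fix y assume y: "y \<in> set ys"
    then have "y \<in> Y"
      using Ys(2) ys by blast
    then show "continuous_map X (top_of_set {0..1}) (\<Phi> y)"
      and "\<And>x. x \<in> topspace X - N y \<Longrightarrow> \<Phi> y x = 0"
      and "\<And>z. z \<in> Y \<Longrightarrow> \<Phi> y z \<in> {0, 1}"
      using Q\<Phi>[of y] by auto
  next
    fix z assume "z \<in> Y"
    then obtain y where "y \<in> Ys" "z \<in> Q y"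
      using Ys(3) by blast
    then show "\<exists>y\<in>set ys. \<Phi> y z = 1"
      using Q\<Phi>[of y] Ys(2) ys \<open>z \<in> Y\<close> by blast
  qed
qed

lemma mspace_unit_cfunspace:
  assumes "compact_space X"
  shows "f \<in> mspace (cfunspace X (submetric euclidean_metric {0..1::real})) \<longleftrightarrow>
         continuous_map X (top_of_set {0..1}) f \<and> f \<in> extensional (topspace X)"
proof -
  have "mspace (cfunspace X (submetric euclidean_metric {0..1::real})) =
        {f. (\<forall>x\<in>topspace X. f x \<in> {0..1}) \<and> f \<in> extensional (topspace X) \<and>
            continuous_map X (top_of_set {0..1}) f}"
    using assms unfolding compact_space_def
    by (simp add: compactin_mspace_cfunspace mtopology_of_submetric del: mspace_cfunspace)
  then show ?thesis
    by (auto simp: continuous_map_def simp del: mspace_cfunspace)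
qed

lemma Lipschitz_continuous_map_flatten_unit_cfunspace:
  fixes X :: "'a topology" and \<Phi> :: "'a \<Rightarrow> 'a \<Rightarrow> real"
  defines "C \<equiv> cfunspace X (submetric euclidean_metric {0..1})"
  assumes "compact_space X" and ys: "set ys \<subseteq> topspace X"
    and \<Phi>: "\<And>y. y \<in> set ys \<Longrightarrow> continuous_map X (top_of_set {0..1}) (\<Phi> y)"
  shows "Lipschitz_continuous_map C C (\<lambda>f. restrict (flatten \<Phi> ys f) (topspace X))"
proof -
  have C_iff: "f \<in> mspace C \<longleftrightarrow> continuous_map X (top_of_set {0..1}) f \<and> f \<in> extensional (topspace X)" for f
    unfolding C_def using assms(2) by (rule mspace_unit_cfunspace)
  have \<Phi>01: "\<Phi> y x \<in> {0..1}" if "y \<in> set ys" "x \<in> topspace X" for y x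
    using \<Phi>[OF that(1)] that(2) by (auto simp: continuous_map_def)
  have flat_C: "restrict (flatten \<Phi> ys f) (topspace X) \<in> mspace C" if "f \<in> mspace C" for f
  proof -
    have f: "continuous_map X (top_of_set {0..1}) f"
      using that C_iff by blast
    then have "continuous_map X euclideanreal (flatten \<Phi> ys f)"
      using \<Phi> by (intro continuous_map_flatten) (auto simp: continuous_map_in_subtopology)
    moreover have "flatten \<Phi> ys f x \<in> {0..1}" if "x \<in> topspace X" for x
      using f \<Phi>01 ys that by (intro flatten_in_interval) (auto simp: continuous_map_def)
    ultimately have "continuous_map X (top_of_set {0..1}) (restrict (flatten \<Phi> ys f) (topspace X))"
      by (auto simp: continuous_map_in_subtopology intro: continuous_map_eq)
    then show ?thesis
      by (simp add: C_iff)
  qed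
  have flat_dist: "mdist C (restrict (flatten \<Phi> ys f) (topspace X)) (restrict (flatten \<Phi> ys f') (topspace X))
          \<le> mdist C f f'" if "f \<in> mspace C" "f' \<in> mspace C" for f f'
  proof -
    have "\<bar>f x - f' x\<bar> \<le> mdist C f f'" if "x \<in> topspace X" for x
      using mdist_le_mdist_cfunspace[OF \<open>f \<in> mspace C\<close>[unfolded C_def] \<open>f' \<in> mspace C\<close>[unfolded C_def] that]
      by (simp add: C_def dist_real_def)
    then have "\<bar>flatten \<Phi> ys f x - flatten \<Phi> ys f' x\<bar> \<le> mdist C f f'" if "x \<in> topspace X" for x
      using \<Phi>01 ys that by (intro abs_flatten_diff_le) auto
    moreover have "0 \<le> mdist C f f'"
      using that by simp
    ultimately show ?thesis
      unfolding C_def by (intro mdist_cfunspace_le) (auto simp: dist_real_def)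
  qed
  show ?thesis
    unfolding Lipschitz_continuous_map_def
  proof (intro conjI exI[of _ 1] ballI)
    show "(\<lambda>f. restrict (flatten \<Phi> ys f) (topspace X)) \<in> mspace C \<rightarrow> mspace C"
      using flat_C by blast
  qed (use flat_dist in simp)
qed

lemma mdist_flatten_unit_cfunspace_le:
  fixes X :: "'a topology" and \<Phi> :: "'a \<Rightarrow> 'a \<Rightarrow> real"
  assumes "0 \<le> e" and "\<And>y x. y \<in> set ys \<Longrightarrow> x \<in> topspace X \<Longrightarrow> \<Phi> y x \<in> {0..1}"
    and "\<And>y x. y \<in> set ys \<Longrightarrow> x \<in> topspace X \<Longrightarrow> \<Phi> y x \<noteq> 0 \<Longrightarrow> \<bar>f y - f x\<bar> \<le> e"
  shows "mdist (cfunspace X (submetric euclidean_metric {0..1})) (restrict (flatten \<Phi> ys f) (topspace X)) f \<le> e"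
proof (rule mdist_cfunspace_le)
  fix x assume x: "x \<in> topspace X"
  have "\<bar>flatten \<Phi> ys f x - f x\<bar> \<le> e"
    using assms x by (intro abs_flatten_diff_self_le) auto
  then show "mdist (submetric euclidean_metric {0..1}) (restrict (flatten \<Phi> ys f) (topspace X) x) (f x) \<le> e"
    using x by (simp add: dist_real_def)
qed (rule assms(1))

lemma compact_family_approx_finitely_valued_on_zero_dim:
  fixes X :: "'a topology" and K :: "'k topology" and g :: "'k \<Rightarrow> 'a \<Rightarrow> real"
  defines "C \<equiv> cfunspace X (submetric euclidean_metric {0..1})"
  assumes "compact_space X" "Hausdorff_space X" "closedin X Y" "subtopology X Y dim_le 0"
    and "compact_space K" and g: "continuous_map K (mtopology_of C) g" and "\<epsilon> > 0"
  obtains h where "h \<in> cmaps K (mtopology_of C)"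
    "\<And>k. k \<in> topspace K \<Longrightarrow> finite (h k ` Y)"
    "\<And>k. k \<in> topspace K \<Longrightarrow> mdist C (h k) (g k) < \<epsilon>"
proof -
  have YX: "Y \<subseteq> topspace X"
    using assms(4) closedin_subset by blast
  define e where "e = \<epsilon> / 2"
  have "e > 0"
    using \<open>\<epsilon> > 0\<close> by (simp add: e_def)
  have "\<exists>N. openin X N \<and> y \<in> N \<and> (\<forall>x\<in>N. \<forall>k\<in>topspace K. \<bar>g k x - g k y\<bar> < e)" if "y \<in> Y" for y
    using compact_family_equicontinuous_at[OF \<open>compact_space K\<close> g[unfolded C_def], of y e] YX that \<open>e > 0\<close>
    by (metis (no_types, lifting) dist_real_def mdist_euclidean_metric mdist_submetric subsetD)
  then obtain N where N: "\<And>y. y \<in> Y \<Longrightarrow> openin X (N y) \<and> y \<in> N y \<and> (\<forall>x\<in>N y. \<forall>k\<in>topspace K. \<bar>g k x - g k y\<bar> < e)"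
    by metis
  obtain ys and \<Phi> :: "'a \<Rightarrow> 'a \<Rightarrow> real" where ys: "set ys \<subseteq> Y"
    and \<Phi>cont: "\<And>y. y \<in> set ys \<Longrightarrow> continuous_map X (top_of_set {0..1}) (\<Phi> y)"
    and \<Phi>supp: "\<And>y x. y \<in> set ys \<Longrightarrow> x \<in> topspace X - N y \<Longrightarrow> \<Phi> y x = 0"
    and \<Phi>Y: "\<And>y z. y \<in> set ys \<Longrightarrow> z \<in> Y \<Longrightarrow> \<Phi> y z \<in> {0, 1}"
    and \<Phi>cover: "\<And>z. z \<in> Y \<Longrightarrow> \<exists>y\<in>set ys. \<Phi> y z = 1"
    using zero_dim_subspace_indicator_family[OF assms(2-5), of N] N by blast
  define flat where "flat f = restrict (flatten \<Phi> ys f) (topspace X)" for f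
  have "Lipschitz_continuous_map C C flat"
    unfolding flat_def C_def
    by (rule Lipschitz_continuous_map_flatten_unit_cfunspace[OF assms(2)]) (use ys YX \<Phi>cont in auto)
  then have "continuous_map (mtopology_of C) (mtopology_of C) flat"
    by (rule Lipschitz_continuous_imp_continuous_map)
  then have hcont: "continuous_map K (mtopology_of C) (flat \<circ> g)"
    using g by (intro continuous_map_compose)
  define h where "h = restrict (flat \<circ> g) (topspace K)"
  show thesis
  proof
    show "h \<in> cmaps K (mtopology_of C)"
      using hcont unfolding h_def cmaps_def by (auto intro: continuous_map_eq)
  next
    fix k assume k: "k \<in> topspace K"
    have "h k ` Y \<subseteq> g k ` set ys"
      using k YX \<Phi>Y \<Phi>cover flatten_in_image[of ys \<Phi>] by (auto simp: h_def flat_def)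
    then show "finite (h k ` Y)"
      using finite_subset by blast
    have "mdist C (flat (g k)) (g k) \<le> e"
      unfolding flat_def C_def
    proof (rule mdist_flatten_unit_cfunspace_le)
      show "\<Phi> y x \<in> {0..1}" if "y \<in> set ys" "x \<in> topspace X" for y x
        using \<Phi>cont[OF that(1)] that(2) by (auto simp: continuous_map_def)
      show "\<bar>g k y - g k x\<bar> \<le> e" if "y \<in> set ys" "x \<in> topspace X" "\<Phi> y x \<noteq> 0" for y x
      proof -
        have "x \<in> N y"
          using \<Phi>supp[of y x] that by blast
        then show ?thesis
          using N[of y] ys that(1) k by (fastforce simp: abs_minus_commute)
      qed
    qed (use \<open>e > 0\<close> in simp)
    then show "mdist C (h k) (g k) < \<epsilon>"
      using k \<open>\<epsilon> > 0\<close> by (simp add: h_def e_def)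
  qed
qed

lemma compact_open_dense_maps_avoiding_infinite_on:
  fixes X :: "'a topology" and K :: "'k topology" and F :: "('a \<Rightarrow> real) set"
  defines "C \<equiv> cfunspace X (submetric euclidean_metric {0..1})"
  assumes "compact_space X" "Hausdorff_space X" "closedin X Y" "subtopology X Y dim_le 0"
    and "compact_space K" and "\<forall>f \<in> F. infinite (f ` Y)"
  shows "compact_open_topology K (mtopology_of C) closure_of cmaps K (subtopology (mtopology_of C) (mspace C - F)) =
         topspace (compact_open_topology K (mtopology_of C))"
proof (rule compact_open_closure_of_uniformly_dense)
  show "cmaps K (subtopology (mtopology_of C) (mspace C - F)) \<subseteq> cmaps K (mtopology_of C)"
    by (simp add: cmaps_subtopology)
  fix g and \<epsilon> :: real assume "g \<in> cmaps K (mtopology_of C)" "\<epsilon> > 0"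
  then obtain h where h: "h \<in> cmaps K (mtopology_of C)" "\<And>k. k \<in> topspace K \<Longrightarrow> finite (h k ` Y)"
    "\<And>k. k \<in> topspace K \<Longrightarrow> mdist C (h k) (g k) < \<epsilon>"
    using compact_family_approx_finitely_valued_on_zero_dim[OF assms(2-6), of g \<epsilon>]
    by (auto simp: C_def cmaps_def)
  have "h ` topspace K \<subseteq> mspace C - F"
    using h(1,2) assms(7) continuous_map_funspace by (fastforce simp: cmaps_def)
  then show "\<exists>h\<in>cmaps K (subtopology (mtopology_of C) (mspace C - F)). \<forall>k\<in>topspace K. mdist C (h k) (g k) < \<epsilon>"
    using h(1,3) by (auto simp: cmaps_subtopology)
qed

theorem lemma4:
  fixes X :: "'a topology" and Y :: "'a set" and F :: "('a \<Rightarrow> real) set"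
  assumes "compact_space X" and "Hausdorff_space X"
    and "closedin X Y" and "subtopology X Y dim_le 0"
    and "closedin (unit_cfun_topology X) F"
    and "\<forall>f \<in> F. infinite (f ` Y)"
  shows "Z_set TYPE('k) (unit_cfun_topology X) F"
  unfolding Z_set_def
proof (intro conjI allI impI)
  show "closedin (unit_cfun_topology X) F"
    by (rule assms(5))
  fix K :: "'k topology" assume "compact_space K \<and> Hausdorff_space K"
  then have "compact_space K"
    by blast
  then show "compact_open_topology K (unit_cfun_topology X) closure_of
      cmaps K (subtopology (unit_cfun_topology X) (topspace (unit_cfun_topology X) - F)) =
    topspace (compact_open_topology K (unit_cfun_topology X))"
    using compact_open_dense_maps_avoiding_infinite_on[OF assms(1-4) _ assms(6)]
    by (simp add: unit_cfun_topology_def)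
qed

end
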